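(* Suppose that in a spherical tiling by angle congruent pentagons an angle value $\theta$ appears at no degree $3$ vertex. Let $v_k$ be the number of vertices of degree $k$. Then: (1) there is at most one angle value with this property; (2) $\theta$ appears exactly once among the five angles of the pentagon; (3) $2v_4+v_5\ge 12$; (4) there is a vertex of one of the following kinds: a degree $4$ vertex whose corners have angles $\alpha,\theta,\theta,\theta$ with $\alpha\neq\theta$; a degree $4$ vertex all of whose corners have angle $\theta$; or a degree $5$ vertex all of whose corners have angle $\theta$.
   Context: A spherical tiling by angle congruent pentagons is a graph embedded in the sphere whose faces (tiles) are all pentagons, the tiling being edge-to-edge with every vertex of degree at least $3$; each corner of each tile carries a positive real angle, the angles at every vertex sum to $2\pi$, and all tiles have the same multiset of five corner angles (the "pentagon"). An angle value appears at a vertex if some corner at that vertex has that angle. *)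

theory Defs
  imports Complex_Main "HOL-Library.Multiset"
begin

text \<open>Combinatorial maps: a graph 2-cell embedded in a closed surface is given by
a finite set of darts D (half-edges), a fixed-point-free involution al (the two darts
of an edge) and a permutation sg (rotation of darts around their common vertex).
Vertices are sg-orbits, edges are al-orbits, faces (tiles) are orbits of
phi = sg o al.  A dart d is identified with the corner of the tile (phi-orbit of d)
at the vertex (sg-orbit of d).\<close>

definition orb :: "('a \<Rightarrow> 'a) \<Rightarrow> 'a \<Rightarrow> 'a set" where
  "orb f x = {(f ^^ n) x | n. True}"

definition vertices_of :: "'a set \<Rightarrow> ('a \<Rightarrow> 'a) \<Rightarrow> 'a set set" where
  "vertices_of D sg = orb sg ` D"

definition edges_of :: "'a set \<Rightarrow> ('a \<Rightarrow> 'a) \<Rightarrow> 'a set set" where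
  "edges_of D al = orb al ` D"

definition faces_of :: "'a set \<Rightarrow> ('a \<Rightarrow> 'a) \<Rightarrow> ('a \<Rightarrow> 'a) \<Rightarrow> 'a set set" where
  "faces_of D al sg = orb (sg \<circ> al) ` D"

definition spherical_map :: "'a set \<Rightarrow> ('a \<Rightarrow> 'a) \<Rightarrow> ('a \<Rightarrow> 'a) \<Rightarrow> bool" where
  "spherical_map D al sg \<longleftrightarrow>
     finite D \<and> D \<noteq> {} \<and>
     bij_betw al D D \<and> bij_betw sg D D \<and>
     (\<forall>d\<in>D. al (al d) = d \<and> al d \<noteq> d) \<and>
     (\<forall>d\<in>D. \<forall>e\<in>D. (d, e) \<in> ({(x, al x) | x. x \<in> D} \<union> {(x, sg x) | x. x \<in> D})\<^sup>*) \<and>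
     int (card (vertices_of D sg)) - int (card (edges_of D al)) + int (card (faces_of D al sg)) = 2"

definition pentagonal_tiling :: "'a set \<Rightarrow> ('a \<Rightarrow> 'a) \<Rightarrow> ('a \<Rightarrow> 'a) \<Rightarrow> bool" where
  "pentagonal_tiling D al sg \<longleftrightarrow>
     spherical_map D al sg \<and>
     (\<forall>d\<in>D. card (orb sg d) \<ge> 3) \<and>
     (\<forall>d\<in>D. card (orb (sg \<circ> al) d) = 5 \<and> inj_on (orb sg) (orb (sg \<circ> al) d))"

definition angle_congruent_tiling ::
  "'a set \<Rightarrow> ('a \<Rightarrow> 'a) \<Rightarrow> ('a \<Rightarrow> 'a) \<Rightarrow> ('a \<Rightarrow> real) \<Rightarrow> real multiset \<Rightarrow> bool" where
  "angle_congruent_tiling D al sg ang P \<longleftrightarrow>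
     pentagonal_tiling D al sg \<and>
     (\<forall>d\<in>D. ang d > 0) \<and>
     (\<forall>d\<in>D. (\<Sum>x\<in>orb sg d. ang x) = 2 * pi) \<and>
     (\<forall>d\<in>D. image_mset ang (mset_set (orb (sg \<circ> al) d)) = P)"

definition absent_at_deg3 :: "'a set \<Rightarrow> ('a \<Rightarrow> 'a) \<Rightarrow> ('a \<Rightarrow> real) \<Rightarrow> real \<Rightarrow> bool" where
  "absent_at_deg3 D sg ang th \<longleftrightarrow>
     (\<forall>v\<in>vertices_of D sg. card v = 3 \<longrightarrow> (\<forall>x\<in>v. ang x \<noteq> th))"

definition num_deg :: "'a set \<Rightarrow> ('a \<Rightarrow> 'a) \<Rightarrow> nat \<Rightarrow> nat" where
  "num_deg D sg k = card {v \<in> vertices_of D sg. card v = k}"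

end

theory Submission
  imports Defs
begin

text \<open>The corners are the darts, so 2E = 5F = \<Sum> deg v, and the Euler formula
becomes \<Sum> 2(deg v - 3) = F - 12, the sum running over the vertices. A value \<theta> of the pentagon
sits at F times its multiplicity \<ge> F corners. If \<theta> avoids the degree 3 vertices, each vertex
v carries at most deg v \<le> 4(deg v - 3) of them, so F \<le> 2F - 24; a second such value, or a
second copy of \<theta> in the pentagon, would need 2F corners. A vertex of degree 4 or 5 carries more
than 2(deg v - 3) copies of \<theta> only if it is one of the listed vertices, and
2(deg v - 3) + 2[deg v = 4] + [deg v = 5] copies always suffice; summing gives the remaining
claims.\<close>

lemma orb_funpow_mem: "(f ^^ n) x \<in> orb f x"
  unfolding orb_def by blast

lemma orb_self: "x \<in> orb f x"
  using orb_funpow_mem[where n=0] by simp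

lemma orb_subset_orb: "y \<in> orb f x \<Longrightarrow> orb f y \<subseteq> orb f x"
  unfolding orb_def by (auto simp flip: funpow_add[unfolded comp_def, THEN fun_cong])

lemma orb_subset:
  assumes "bij_betw f D D" "x \<in> D"
  shows "orb f x \<subseteq> D"
  using assms bij_betw_funpow[OF assms(1)] unfolding orb_def by (auto dest: bij_betw_apply)

lemma orb_funpow_period:
  assumes "finite D" "bij_betw f D D" "x \<in> D"
  obtains p where "p > 0" "(f ^^ p) x = x"
proof -
  have "range (\<lambda>n. (f ^^ n) x) \<subseteq> D"
    using orb_subset[OF assms(2,3)] orb_funpow_mem[of _ f x] by blast
  then have "\<not> inj (\<lambda>n. (f ^^ n) x)"
    using assms(1) finite_subset finite_imageD infinite_UNIV_nat by blast
  then obtain i j where ij: "i < j" "(f ^^ i) x = (f ^^ j) x"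
    unfolding inj_def by (metis linorder_neqE_nat)
  have "(f ^^ i) ((f ^^ (j - i)) x) = (f ^^ i) x"
    using ij by (simp flip: funpow_add[unfolded comp_def, THEN fun_cong])
  moreover have "inj_on (f ^^ i) D"
    using bij_betw_funpow[OF assms(2)] bij_betw_imp_inj_on by blast
  moreover have "(f ^^ (j - i)) x \<in> D"
    using orb_subset[OF assms(2,3)] orb_funpow_mem[of _ f x] by blast
  ultimately have "(f ^^ (j - i)) x = x"
    using assms(3) by (meson inj_onD)
  with ij(1) show thesis
    by (intro that[of "j - i"]) simp_all
qed

lemma orb_eq_orb:
  assumes "finite D" "bij_betw f D D" "x \<in> D" "y \<in> orb f x"
  shows "orb f y = orb f x"
proof
  show "orb f y \<subseteq> orb f x"
    using assms(4) by (rule orb_subset_orb)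
  obtain p where p: "p > 0" "(f ^^ p) x = x"
    using orb_funpow_period[OF assms(1-3)] .
  obtain n where n: "y = (f ^^ n) x"
    using assms(4) unfolding orb_def by blast
  have "(f ^^ ((p - 1) * n)) y = (f ^^ ((p - 1) * n + n)) x"
    by (simp add: n funpow_add)
  also have "(p - 1) * n + n = p * n"
    using p(1) by (cases p) simp_all
  also have "(f ^^ (p * n)) x = x"
    using funpow_mod_eq[where m="p * n" and n=p and f=f and x=x] p(2) by simp
  finally have "x \<in> orb f y"
    using orb_funpow_mem[of "(p - 1) * n" f y] by simp
  then show "orb f x \<subseteq> orb f y"
    by (rule orb_subset_orb)
qed

lemma card_eq_sum_orbits:
  assumes "finite D" "bij_betw f D D" "A \<subseteq> D"
  shows "card A = (\<Sum>c\<in>orb f ` D. card (c \<inter> A))"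
proof -
  have "c = c'" if c: "c \<in> orb f ` D" "c' \<in> orb f ` D" and y: "y \<in> c" "y \<in> c'" for c c' y
  proof -
    obtain a b where "a \<in> D" "c = orb f a" "b \<in> D" "c' = orb f b"
      using c by blast
    then show ?thesis
      using orb_eq_orb[OF assms(1,2)] y by metis
  qed
  then have "\<forall>c\<in>orb f ` D. \<forall>c'\<in>orb f ` D. c \<noteq> c' \<longrightarrow> (c \<inter> A) \<inter> (c' \<inter> A) = {}"
    by blast
  moreover have "(\<Union>c\<in>orb f ` D. c \<inter> A) = A"
    using assms(3) orb_self[of _ f] by blast
  moreover have "finite A"
    using assms(1,3) by (rule finite_subset[rotated])
  ultimately show ?thesis
    using card_UN_disjoint[of "orb f ` D" "\<lambda>c. c \<inter> A"] assms(1) by simp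
qed

lemma card_eq_sum_card_orbits:
  assumes "finite D" "bij_betw f D D"
  shows "card D = (\<Sum>c\<in>orb f ` D. card c)"
proof -
  have "card (c \<inter> D) = card c" if "c \<in> orb f ` D" for c
    using that orb_subset[OF assms(2)] by (metis Int_absorb2 imageE)
  then show ?thesis
    using card_eq_sum_orbits[OF assms order_refl] by simp
qed

lemma orb_involution:
  assumes "f (f x) = x"
  shows "orb f x = {x, f x}"
proof
  have "(f ^^ n) x \<in> {x, f x}" for n
    by (induction n) (use assms in auto)
  then show "orb f x \<subseteq> {x, f x}"
    unfolding orb_def by blast
  show "{x, f x} \<subseteq> orb f x"
    using orb_self[of x f] orb_funpow_mem[of 1 f x] by simp
qed

lemma count_image_mset_mset_set:
  "finite S \<Longrightarrow> count (image_mset g (mset_set S)) t = card {x\<in>S. g x = t}"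
  by (simp add: count_image_mset Int_def conj_commute)

lemma image_mset_mset_set_const:
  "\<forall>y\<in>S. g y = c \<Longrightarrow> image_mset g (mset_set S) = replicate_mset (card S) c"
  by (induction S rule: infinite_finite_induct) auto

lemma image_mset_mset_set_one_exception:
  assumes "finite S" "x \<in> S" "\<forall>y\<in>S - {x}. g y = c"
  shows "image_mset g (mset_set S) = add_mset (g x) (replicate_mset (card S - 1) c)"
  using assms image_mset_mset_set_const[of "S - {x}" g c] by (simp add: mset_set.remove)

lemma spherical_mapD:
  assumes "spherical_map D al sg"
  shows "finite D" and "bij_betw al D D" and "bij_betw sg D D"
    and "\<And>d. d \<in> D \<Longrightarrow> al (al d) = d" and "\<And>d. d \<in> D \<Longrightarrow> al d \<noteq> d"
    and "int (card (vertices_of D sg)) - int (card (edges_of D al)) + int (card (faces_of D al sg)) = 2"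
  using assms unfolding spherical_map_def by simp_all

lemma pentagonal_tilingD:
  assumes "pentagonal_tiling D al sg"
  shows "spherical_map D al sg"
    and "\<And>d. d \<in> D \<Longrightarrow> 3 \<le> card (orb sg d)"
    and "\<And>d. d \<in> D \<Longrightarrow> card (orb (sg \<circ> al) d) = 5"
  using assms unfolding pentagonal_tiling_def by simp_all

lemma angle_congruent_tilingD:
  assumes "angle_congruent_tiling D al sg ang P"
  shows "pentagonal_tiling D al sg"
    and "\<And>d. d \<in> D \<Longrightarrow> image_mset ang (mset_set (orb (sg \<circ> al) d)) = P"
  using assms unfolding angle_congruent_tiling_def by simp_all

lemma spherical_map_bij_face_map:
  "spherical_map D al sg \<Longrightarrow> bij_betw (sg \<circ> al) D D"
  by (rule bij_betw_trans[OF spherical_mapD(2,3)])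

lemma spherical_map_card_darts_eq_degrees:
  "spherical_map D al sg \<Longrightarrow> card D = (\<Sum>v\<in>vertices_of D sg. card v)"
  unfolding vertices_of_def by (rule card_eq_sum_card_orbits[OF spherical_mapD(1,3)])

lemma spherical_map_card_darts_eq_edges:
  assumes "spherical_map D al sg"
  shows "card D = 2 * card (edges_of D al)"
proof -
  have "card e = 2" if e: "e \<in> edges_of D al" for e
  proof -
    obtain d where d: "d \<in> D" "e = orb al d"
      using e unfolding edges_of_def by blast
    then have "e = {d, al d}"
      using orb_involution[of al d] spherical_mapD(4)[OF assms] by simp
    then show ?thesis
      using spherical_mapD(5)[OF assms d(1)] by simp
  qed
  then show ?thesis
    using card_eq_sum_card_orbits[OF spherical_mapD(1,2)[OF assms]] unfolding edges_of_def by simp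
qed

lemma pentagonal_tiling_card_darts_eq_faces:
  assumes "pentagonal_tiling D al sg"
  shows "card D = 5 * card (faces_of D al sg)"
proof -
  note sph = pentagonal_tilingD(1)[OF assms]
  have "card c = 5" if "c \<in> faces_of D al sg" for c
    using that pentagonal_tilingD(3)[OF assms] unfolding faces_of_def by blast
  then show ?thesis
    using card_eq_sum_card_orbits[OF spherical_mapD(1)[OF sph] spherical_map_bij_face_map[OF sph]]
    unfolding faces_of_def by simp
qed

lemma pentagonal_tiling_vertex:
  assumes "pentagonal_tiling D al sg" "v \<in> vertices_of D sg"
  shows "v \<subseteq> D" and "3 \<le> card v" and "finite v"
proof -
  obtain d where d: "d \<in> D" "v = orb sg d"
    using assms(2) unfolding vertices_of_def by blast
  show "v \<subseteq> D"
    using orb_subset[OF spherical_mapD(3)[OF pentagonal_tilingD(1)[OF assms(1)]] d(1)] d(2) by simp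
  show "3 \<le> card v"
    using pentagonal_tilingD(2)[OF assms(1) d(1)] d(2) by simp
  then show "finite v"
    by (intro card_ge_0_finite) simp
qed

lemma pentagonal_tiling_sum_excess:
  assumes "pentagonal_tiling D al sg"
  shows "(\<Sum>v\<in>vertices_of D sg. 2 * (int (card v) - 3)) = int (card (faces_of D al sg)) - 12"
proof -
  note sph = pentagonal_tilingD(1)[OF assms]
  have "(\<Sum>v\<in>vertices_of D sg. 2 * (int (card v) - 3))
      = 2 * int (card D) - 6 * int (card (vertices_of D sg))"
    by (simp add: spherical_map_card_darts_eq_degrees[OF sph] sum_subtractf sum_distrib_left)
  then show ?thesis
    using spherical_mapD(6)[OF sph] spherical_map_card_darts_eq_edges[OF sph]
      pentagonal_tiling_card_darts_eq_faces[OF assms]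
    by linarith
qed

lemma card_corners_le_sum_vertices:
  assumes "spherical_map D al sg" "A \<subseteq> D"
    and "\<And>v. v \<in> vertices_of D sg \<Longrightarrow> int (card (v \<inter> A)) \<le> b v"
  shows "int (card A) \<le> (\<Sum>v\<in>vertices_of D sg. b v)"
proof -
  have "card A = (\<Sum>v\<in>vertices_of D sg. card (v \<inter> A))"
    unfolding vertices_of_def by (rule card_eq_sum_orbits[OF spherical_mapD(1,3)[OF assms(1)] assms(2)])
  then have "int (card A) = (\<Sum>v\<in>vertices_of D sg. int (card (v \<inter> A)))"
    by simp
  also have "\<dots> \<le> (\<Sum>v\<in>vertices_of D sg. b v)"
    using assms(3) by (rule sum_mono)
  finally show ?thesis .
qed

lemma card_corners_off_deg3_le:
  assumes "pentagonal_tiling D al sg" "A \<subseteq> D"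
    and "\<And>v. v \<in> vertices_of D sg \<Longrightarrow> card v = 3 \<Longrightarrow> v \<inter> A = {}"
  shows "int (card A) \<le> 2 * int (card (faces_of D al sg)) - 24"
proof -
  have "int (card A) \<le> (\<Sum>v\<in>vertices_of D sg. 2 * (2 * (int (card v) - 3)))"
  proof (rule card_corners_le_sum_vertices[OF pentagonal_tilingD(1)[OF assms(1)] assms(2)])
    fix v assume v: "v \<in> vertices_of D sg"
    have "card (v \<inter> A) \<le> card v"
      using pentagonal_tiling_vertex(3)[OF assms(1) v] by (intro card_mono) auto
    then show "int (card (v \<inter> A)) \<le> 2 * (2 * (int (card v) - 3))"
      using pentagonal_tiling_vertex(2)[OF assms(1) v] assms(3)[OF v] by (cases "card v = 3") auto
  qed
  also have "\<dots> = 2 * (\<Sum>v\<in>vertices_of D sg. 2 * (int (card v) - 3))"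
    by (rule sum_distrib_left[symmetric])
  also have "\<dots> = 2 * int (card (faces_of D al sg)) - 24"
    unfolding pentagonal_tiling_sum_excess[OF assms(1)] by simp
  finally show ?thesis .
qed

lemma angle_congruent_tiling_card_angle:
  assumes "angle_congruent_tiling D al sg ang P"
  shows "card {d\<in>D. ang d = t} = card (faces_of D al sg) * count P t"
proof -
  note sph = pentagonal_tilingD(1)[OF angle_congruent_tilingD(1)[OF assms]]
  note fin = spherical_mapD(1)[OF sph] and phi = spherical_map_bij_face_map[OF sph]
  have "card {d\<in>D. ang d = t} = (\<Sum>c\<in>faces_of D al sg. card (c \<inter> {d\<in>D. ang d = t}))"
    unfolding faces_of_def by (rule card_eq_sum_orbits[OF fin phi]) blast
  also have "\<dots> = (\<Sum>c\<in>faces_of D al sg. count P t)"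
  proof (rule sum.cong[OF refl])
    fix c assume "c \<in> faces_of D al sg"
    then obtain d where d: "d \<in> D" "c = orb (sg \<circ> al) d"
      unfolding faces_of_def by blast
    then have "c \<subseteq> D"
      using orb_subset[OF phi] by blast
    then have "c \<inter> {d\<in>D. ang d = t} = {x\<in>c. ang x = t}" and "finite c"
      using fin finite_subset by blast+
    then show "card (c \<inter> {d\<in>D. ang d = t}) = count P t"
      using count_image_mset_mset_set[of c ang t] angle_congruent_tilingD(2)[OF assms] d by simp
  qed
  finally show ?thesis
    by simp
qed

lemma card_faces_le_card_angle:
  assumes "angle_congruent_tiling D al sg ang P" "t \<in># P"
  shows "card (faces_of D al sg) \<le> card {d\<in>D. ang d = t}"
  using angle_congruent_tiling_card_angle[OF assms(1)] assms(2) by simp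

lemma absent_at_deg3_disjoint:
  "absent_at_deg3 D sg ang t \<Longrightarrow> v \<in> vertices_of D sg \<Longrightarrow> card v = 3
    \<Longrightarrow> v \<inter> {d\<in>D. ang d = t} = {}"
  unfolding absent_at_deg3_def by blast

lemma absent_angle_count_eq_1:
  assumes tiling: "angle_congruent_tiling D al sg ang P"
    and "th \<in># P" "absent_at_deg3 D sg ang th"
  shows "count P th = 1"
proof (rule ccontr)
  assume "count P th \<noteq> 1"
  with \<open>th \<in># P\<close> have "2 \<le> count P th"
    using count_greater_zero_iff[of P th] by linarith
  then have "2 * card (faces_of D al sg) \<le> card {d\<in>D. ang d = th}"
    unfolding angle_congruent_tiling_card_angle[OF tiling] by simp
  moreover have "int (card {d\<in>D. ang d = th}) \<le> 2 * int (card (faces_of D al sg)) - 24"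
    using angle_congruent_tilingD(1)[OF tiling] absent_at_deg3_disjoint[OF assms(3)]
    by (intro card_corners_off_deg3_le) auto
  ultimately show False
    by linarith
qed

lemma absent_angle_unique:
  assumes tiling: "angle_congruent_tiling D al sg ang P"
    and "th \<in># P" "absent_at_deg3 D sg ang th"
    and "th' \<in># P" "absent_at_deg3 D sg ang th'"
  shows "th' = th"
proof (rule ccontr)
  assume "th' \<noteq> th"
  let ?A = "{d\<in>D. ang d = th} \<union> {d\<in>D. ang d = th'}"
  have "finite D"
    using tiling by (metis angle_congruent_tilingD(1) pentagonal_tilingD(1) spherical_mapD(1))
  with \<open>th' \<noteq> th\<close> have "card ?A = card {d\<in>D. ang d = th} + card {d\<in>D. ang d = th'}"
    by (intro card_Un_disjoint) auto
  then have "2 * card (faces_of D al sg) \<le> card ?A"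
    using card_faces_le_card_angle[OF tiling assms(2)] card_faces_le_card_angle[OF tiling assms(4)]
    by linarith
  moreover have "int (card ?A) \<le> 2 * int (card (faces_of D al sg)) - 24"
    using angle_congruent_tilingD(1)[OF tiling]
      absent_at_deg3_disjoint[OF assms(3)] absent_at_deg3_disjoint[OF assms(5)]
    by (intro card_corners_off_deg3_le) auto
  ultimately show False
    by linarith
qed

lemma absent_angle_deg45_bound:
  assumes tiling: "angle_congruent_tiling D al sg ang P"
    and "th \<in># P" "absent_at_deg3 D sg ang th"
  shows "12 \<le> 2 * num_deg D sg 4 + num_deg D sg 5"
proof -
  note pent = angle_congruent_tilingD(1)[OF tiling]
  note sph = pentagonal_tilingD(1)[OF pent]
  let ?A = "{d\<in>D. ang d = th}"
  have "int (card ?A) \<le> (\<Sum>v\<in>vertices_of D sg.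
      2 * (int (card v) - 3) + (2 * of_bool (card v = 4) + of_bool (card v = 5)))"
  proof (rule card_corners_le_sum_vertices[OF sph])
    show "?A \<subseteq> D"
      by blast
    fix v assume v: "v \<in> vertices_of D sg"
    have "card (v \<inter> ?A) \<le> card v"
      using pentagonal_tiling_vertex(3)[OF pent v] by (intro card_mono) auto
    then show "int (card (v \<inter> ?A))
        \<le> 2 * (int (card v) - 3) + (2 * of_bool (card v = 4) + of_bool (card v = 5))"
      using pentagonal_tiling_vertex(2)[OF pent v] absent_at_deg3_disjoint[OF assms(3) v]
      by (cases "card v = 3") (auto simp: of_bool_def)
  qed
  also have "\<dots> = (\<Sum>v\<in>vertices_of D sg. 2 * (int (card v) - 3))
      + 2 * (\<Sum>v\<in>vertices_of D sg. of_bool (card v = 4)) + (\<Sum>v\<in>vertices_of D sg. of_bool (card v = 5))"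
    by (simp add: sum.distrib sum_distrib_left)
  also have "\<dots> = int (card (faces_of D al sg)) - 12 + 2 * int (num_deg D sg 4) + int (num_deg D sg 5)"
  proof -
    have "finite (vertices_of D sg)"
      unfolding vertices_of_def using spherical_mapD(1)[OF sph] by simp
    then show ?thesis
      unfolding pentagonal_tiling_sum_excess[OF pent] by (simp add: num_deg_def Int_def)
  qed
  finally show ?thesis
    using card_faces_le_card_angle[OF tiling assms(2)] by linarith
qed

lemma card_angle_at_vertex_le:
  fixes v :: "'a set" and ang :: "'a \<Rightarrow> 'b"
  assumes "finite v" "4 \<le> card v"
    and not_one_exception: "\<And>a. card v = 4 \<Longrightarrow> a \<noteq> th
      \<Longrightarrow> image_mset ang (mset_set v) \<noteq> {#a, th, th, th#}"
    and not_all: "card v = 4 \<or> card v = 5 \<Longrightarrow> \<exists>x\<in>v. ang x \<noteq> th"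
  shows "card {x\<in>v. ang x = th} \<le> 2 * (card v - 3)"
proof -
  let ?S = "{x\<in>v. ang x = th}"
  have S_le: "card ?S \<le> card v"
    using assms(1) by (intro card_mono) auto
  have S_ne: "card ?S \<noteq> card v" if "card v = 4 \<or> card v = 5"
  proof
    assume "card ?S = card v"
    then have "?S = v"
      by (intro card_subset_eq[OF assms(1)]) auto
    then show False
      using not_all[OF that] by auto
  qed
  have S_ne_3: "card ?S \<noteq> 3" if four: "card v = 4"
  proof
    assume "card ?S = 3"
    then have "card (v - ?S) = 1"
      using four assms(1) by (simp add: card_Diff_subset)
    then obtain x where x: "v - ?S = {x}"
      by (rule card_1_singletonE)
    then have "x \<in> v" and "ang x \<noteq> th" and "\<forall>y\<in>v - {x}. ang y = th"
      by auto
    then have "image_mset ang (mset_set v) = {#ang x, th, th, th#}"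
      using image_mset_mset_set_one_exception[OF assms(1), of x ang th] four
      by (simp add: numeral_eq_Suc)
    then show False
      using not_one_exception[OF four \<open>ang x \<noteq> th\<close>] by simp
  qed
  show ?thesis
    using S_le S_ne S_ne_3 assms(2) by linarith
qed

lemma absent_angle_special_vertex:
  assumes tiling: "angle_congruent_tiling D al sg ang P"
    and "th \<in># P" "absent_at_deg3 D sg ang th"
  shows "\<exists>v\<in>vertices_of D sg.
          (card v = 4 \<and> (\<exists>a. a \<noteq> th \<and> image_mset ang (mset_set v) = {#a, th, th, th#}))
        \<or> (card v = 4 \<and> (\<forall>x\<in>v. ang x = th))
        \<or> (card v = 5 \<and> (\<forall>x\<in>v. ang x = th))"
proof (rule ccontr)
  assume none: "\<not> ?thesis"
  note pent = angle_congruent_tilingD(1)[OF tiling]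
  let ?A = "{d\<in>D. ang d = th}"
  have "int (card ?A) \<le> (\<Sum>v\<in>vertices_of D sg. 2 * (int (card v) - 3))"
  proof (rule card_corners_le_sum_vertices[OF pentagonal_tilingD(1)[OF pent]])
    show "?A \<subseteq> D"
      by blast
    fix v assume v: "v \<in> vertices_of D sg"
    have "v \<inter> ?A = {x\<in>v. ang x = th}"
      using pentagonal_tiling_vertex(1)[OF pent v] by blast
    moreover have "card {x\<in>v. ang x = th} \<le> 2 * (card v - 3)" if "4 \<le> card v"
    proof (rule card_angle_at_vertex_le[OF pentagonal_tiling_vertex(3)[OF pent v] that])
      show "image_mset ang (mset_set v) \<noteq> {#a, th, th, th#}" if "card v = 4" "a \<noteq> th" for a
        using none v that by blast
      show "\<exists>x\<in>v. ang x \<noteq> th" if "card v = 4 \<or> card v = 5"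
        using none v that by blast
    qed
    ultimately show "int (card (v \<inter> ?A)) \<le> 2 * (int (card v) - 3)"
      using pentagonal_tiling_vertex(2)[OF pent v] absent_at_deg3_disjoint[OF assms(3) v]
      by (cases "card v = 3") auto
  qed
  then show False
    using pentagonal_tiling_sum_excess[OF pent] card_faces_le_card_angle[OF tiling assms(2)]
    by linarith
qed

theorem lemma4:
  fixes D :: "'a set" and al sg :: "'a \<Rightarrow> 'a" and ang :: "'a \<Rightarrow> real"
    and P :: "real multiset" and th :: real
  assumes tiling: "angle_congruent_tiling D al sg ang P"
    and th_angle: "th \<in># P"
    and th_absent: "absent_at_deg3 D sg ang th"
  shows "(\<forall>th'. th' \<in># P \<and> absent_at_deg3 D sg ang th' \<longrightarrow> th' = th)
    \<and> count P th = 1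
    \<and> 2 * num_deg D sg 4 + num_deg D sg 5 \<ge> 12
    \<and> (\<exists>v\<in>vertices_of D sg.
          (card v = 4 \<and> (\<exists>a. a \<noteq> th \<and> image_mset ang (mset_set v) = {#a, th, th, th#}))
        \<or> (card v = 4 \<and> (\<forall>x\<in>v. ang x = th))
        \<or> (card v = 5 \<and> (\<forall>x\<in>v. ang x = th)))"
  using absent_angle_unique[OF tiling th_angle th_absent]
    absent_angle_count_eq_1[OF tiling th_angle th_absent]
    absent_angle_deg45_bound[OF tiling th_angle th_absent]
    absent_angle_special_vertex[OF tiling th_angle th_absent]
  by blast

end
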